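(* Let $q\ge4$ be an integer and $f(x)=\log\left|\frac{\sin\pi qx}{\sin\pi x}\right|$. For $t\in\left(\frac{3}{8q},\frac{5}{8q}\right)$ and $t\le s<1/q$, $$G(t,s):=U(s)+V(t,s)<0,$$ where $U(s)=\log\frac{\sin\pi(q^{-1}-s)}{\sin\pi(q^{-1}+s)}$ and $$V(t,s)=f(0)-f(t)+f\left(\frac1q-t-\frac{s-t}{q-1}\right)-f\left(\frac1q-t\right)-f'(t)\frac{s-t}{q-1}.$$
   Context: $f(0)=\log q$ (value of $f$ at $0$ by continuity). *)

theory Defs
  imports "HOL-Analysis.Analysis"
begin

text \<open>f(x) = log |sin(pi q x) / sin(pi x)|, extended by continuity at the
  zeros of sin(pi x) (the integers), where the value is log q.\<close>
definition fq :: "nat \<Rightarrow> real \<Rightarrow> real" where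
  "fq q x = (if sin (pi * x) = 0 then ln (real q)
             else ln \<bar>sin (pi * real q * x) / sin (pi * x)\<bar>)"

definition Uq :: "nat \<Rightarrow> real \<Rightarrow> real" where
  "Uq q s = ln (sin (pi * (1 / real q - s)) / sin (pi * (1 / real q + s)))"

definition Vq :: "nat \<Rightarrow> real \<Rightarrow> real \<Rightarrow> real" where
  "Vq q t s = fq q 0 - fq q t
     + fq q (1 / real q - t - (s - t) / (real q - 1)) - fq q (1 / real q - t)
     - deriv (fq q) t * ((s - t) / (real q - 1))"

definition Gq :: "nat \<Rightarrow> real \<Rightarrow> real \<Rightarrow> real" where
  "Gq q t s = Uq q s + Vq q t s"

end

theory Submission
  imports Defs
begin

(* In the variables theta = pi t, sigma = pi s, a = pi/q, d = (sigma - theta)/(q - 1) and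
   eta = a - theta - d, the function f is ln sin (q x) - ln sin x on (0, a), and all terms of G
   become logarithms of sines. Concavity of ln o sin on (0, pi) bounds ln sin (q eta) =
   ln sin (q theta + q d) by its tangent at q theta, which cancels the derivative term
   q cot (q theta) d, and bounds ln sin (a - sigma) by its tangent at eta, which produces
   -(q - 2) d cot eta; this dominates the remaining d cot theta because
   cot theta <= (q - 2) cot (a - theta) <= (q - 2) cot eta. With sin (a + theta) <= sin (a + sigma)
   this gives G(t, s) <= G(t, t), and G(t, t) < 0 amounts to
   q sin theta sin (a - theta) < sin (q theta) sin (a + theta): the left side is at most
   q theta (pi - q theta) / q <= pi^2 / (4 q), while q theta is close enough to pi/2 for the
   right side to be larger. *)

lemma sin_le_tangent:
  fixes z w :: real
  assumes "0 \<le> z" "z \<le> pi" "0 \<le> w" "w \<le> pi"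
  shows "sin w \<le> sin z + cos z * (w - z)"
proof (cases z w rule: linorder_cases)
  case less
  obtain \<xi> where \<xi>: "z < \<xi>" "\<xi> < w" "sin w - sin z = (w - z) * cos \<xi>"
    using MVT2[OF less, of sin cos] by (auto intro: DERIV_sin)
  have "cos \<xi> \<le> cos z" using \<xi> assms by (intro cos_monotone_0_pi_le) auto
  with less have "(w - z) * cos \<xi> \<le> (w - z) * cos z" by (intro mult_left_mono) auto
  with \<xi> show ?thesis by (simp add: algebra_simps)
next
  case greater
  obtain \<xi> where \<xi>: "w < \<xi>" "\<xi> < z" "sin z - sin w = (z - w) * cos \<xi>"
    using MVT2[OF greater, of sin cos] by (auto intro: DERIV_sin)
  have "cos z \<le> cos \<xi>" using \<xi> assms by (intro cos_monotone_0_pi_le) auto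
  with greater have "(z - w) * cos z \<le> (z - w) * cos \<xi>" by (intro mult_left_mono) auto
  with \<xi> show ?thesis by (simp add: algebra_simps)
qed simp

lemma ln_sin_le_tangent:
  fixes z w :: real
  assumes "0 < z" "z < pi" "0 < w" "w < pi"
  shows "ln (sin w) \<le> ln (sin z) + cot z * (w - z)"
proof -
  have pos: "sin z > 0" "sin w > 0" using assms by (auto intro: sin_gt_zero)
  have "ln (sin w) - ln (sin z) = ln (sin w / sin z)" using pos by (simp add: ln_div)
  also have "\<dots> \<le> sin w / sin z - 1" using pos by (intro ln_le_minus_one) auto
  also have "\<dots> = (sin w - sin z) / sin z" using pos by (simp add: field_simps)
  also have "\<dots> \<le> cos z * (w - z) / sin z"
    using sin_le_tangent[of z w] assms pos by (intro divide_right_mono) auto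
  finally show ?thesis by (simp add: cot_def)
qed

lemma cos_ge_one_minus_half_square: "1 - x\<^sup>2 / 2 \<le> cos (x::real)"
proof -
  have "\<bar>sin (x / 2)\<bar> \<le> \<bar>x / 2\<bar>" by (rule abs_sin_x_le_abs_x)
  then have "(sin (x / 2))\<^sup>2 \<le> (x / 2)\<^sup>2"
    by (metis abs_ge_zero power2_abs power_mono)
  moreover have "cos x = 1 - 2 * (sin (x / 2))\<^sup>2"
    using cos_double_sin[of "x / 2"] by simp
  ultimately show ?thesis by (simp add: power_divide)
qed

lemma sin_ge_cubic: "x - \<bar>x\<bar> ^ 3 / 6 \<le> sin (x::real)"
proof -
  have "\<bar>sin x - (\<Sum>m<3. sin_coeff m * x ^ m)\<bar> \<le> inverse (fact 3) * \<bar>x\<bar> ^ 3"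
    by (rule Maclaurin_sin_bound)
  moreover have "(\<Sum>m<3. sin_coeff m * x ^ m) = x"
    by (simp add: eval_nat_numeral sin_coeff_def)
  moreover have "inverse (fact 3) = (1 / 6 :: real)" by (simp add: eval_nat_numeral)
  ultimately have "\<bar>sin x - x\<bar> \<le> \<bar>x\<bar> ^ 3 / 6" by simp
  then show ?thesis by linarith
qed

lemma x_cos_le_sin:
  fixes x :: real
  assumes "0 < x" "x < pi / 2"
  shows "x * cos x \<le> sin x"
proof -
  have "cos x > 0" using assms by (intro cos_gt_zero_pi) auto
  moreover have "x \<le> tan x"
    using abs_tan_ge[of x] tan_gt_zero[of x] assms by simp
  ultimately show ?thesis by (simp add: tan_def field_simps)
qed

lemma cot_antimono:
  fixes x y :: real
  assumes "0 < x" "x \<le> y" "y \<le> pi / 2"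
  shows "cot y \<le> cot x"
proof -
  have "sin x > 0" using assms by (intro sin_gt_zero) auto
  then show ?thesis
    unfolding cot_def using assms
    by (intro frac_le cos_monotone_0_pi_le sin_monotone_2pi_le cos_ge_zero) auto
qed

lemma pi_bounds: "157 / 50 \<le> pi" "pi \<le> 63 / 20"
  using pi_approx by auto

lemma sin_ge_near_pi_half:
  assumes "\<bar>x - pi / 2\<bar> \<le> 2 / 5"
  shows "23 / 25 \<le> sin x"
proof -
  have "\<bar>pi / 2 - x\<bar>\<^sup>2 \<le> (2 / 5)\<^sup>2"
    using assms by (intro power_mono) (auto simp: abs_minus_commute)
  then have "(pi / 2 - x)\<^sup>2 \<le> 4 / 25" by (simp add: power_divide)
  then show ?thesis
    using cos_ge_one_minus_half_square[of "pi / 2 - x"] by (simp add: cos_sin_eq)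
qed

lemma sin_ge_linear:
  fixes y :: real
  assumes "0 \<le> y" "y \<le> 13 / 10"
  shows "71 / 100 * y \<le> sin y"
proof -
  have "y\<^sup>2 \<le> 169 / 100" using power_mono[OF assms(2,1), of 2] by (simp add: power_divide)
  then have "y * y\<^sup>2 \<le> y * (169 / 100)" using assms by (intro mult_left_mono) auto
  moreover have "y ^ 3 = y * y\<^sup>2" by (simp add: power3_eq_cube power2_eq_square)
  ultimately show ?thesis using sin_ge_cubic[of y] assms by simp
qed

lemma sin_pos_below_inverse:
  assumes "0 < x" "x < 1 / real q"
  shows "sin (pi * x) > 0" "sin (real q * (pi * x)) > 0"
proof -
  have q: "real q \<ge> 1" using assms by (cases q) auto
  then have "x < 1" using assms by (smt (verit) divide_le_eq_1)
  then show "sin (pi * x) > 0" using assms by (intro sin_gt_zero) auto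
  have "real q * (pi * x) < pi" using assms q by (simp add: field_simps)
  then show "sin (real q * (pi * x)) > 0" using assms q by (intro sin_gt_zero) auto
qed

lemma fq_eq_ln_sin_diff:
  assumes "0 < x" "x < 1 / real q"
  shows "fq q x = ln (sin (real q * (pi * x))) - ln (sin (pi * x))"
  using sin_pos_below_inverse[OF assms] by (simp add: fq_def ln_div mult_ac)

lemma deriv_fq:
  assumes "0 < x" "x < 1 / real q"
  shows "deriv (fq q) x = pi * (real q * cot (real q * (pi * x)) - cot (pi * x))"
proof -
  define g where "g y = ln (sin (real q * (pi * y))) - ln (sin (pi * y))" for y
  note pos = sin_pos_below_inverse[OF assms]
  have "(g has_field_derivative
          cos (real q * (pi * x)) * (real q * pi) / sin (real q * (pi * x))
          - cos (pi * x) * pi / sin (pi * x)) (at x)"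
    unfolding g_def using pos by (auto intro!: derivative_eq_intros)
  then have "(fq q has_field_derivative
          cos (real q * (pi * x)) * (real q * pi) / sin (real q * (pi * x))
          - cos (pi * x) * pi / sin (pi * x)) (at x)"
  proof (rule has_field_derivative_transform_within_open)
    show "open {0<..<1 / real q}" "x \<in> {0<..<1 / real q}" using assms by auto
    show "g y = fq q y" if "y \<in> {0<..<1 / real q}" for y
      using that by (simp add: g_def fq_eq_ln_sin_diff)
  qed
  then have "deriv (fq q) x = cos (real q * (pi * x)) * (real q * pi) / sin (real q * (pi * x))
          - cos (pi * x) * pi / sin (pi * x)"
    by (rule DERIV_imp_deriv)
  also have "\<dots> = pi * (real q * cot (real q * (pi * x)) - cot (pi * x))"
    by (simp add: cot_def right_diff_distrib mult_ac)
  finally show ?thesis .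
qed

definition G_sin :: "real \<Rightarrow> real \<Rightarrow> real \<Rightarrow> real" where
  "G_sin Q \<theta> \<sigma> =
    (let a = pi / Q; d = (\<sigma> - \<theta>) / (Q - 1); \<eta> = a - \<theta> - d in
     ln (sin (a - \<sigma>) / sin (a + \<sigma>)) + ln Q - 2 * ln (sin (Q * \<theta>))
     + ln (sin \<theta>) + ln (sin (a - \<theta>)) + ln (sin (Q * \<eta>)) - ln (sin \<eta>)
     - (Q * cot (Q * \<theta>) - cot \<theta>) * d)"

lemma Gq_eq_G_sin:
  assumes "2 \<le> q" "0 < t" "t \<le> s" "s < 1 / real q"
  shows "Gq q t s = G_sin (real q) (pi * t) (pi * s)"
proof -
  define Q where "Q = real q"
  define x where "x = 1 / Q - t - (s - t) / (Q - 1)"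
  have Q: "2 \<le> Q" using assms by (simp add: Q_def)
  have "(s - t) * 1 \<le> (s - t) * (Q - 1)" using assms Q by (intro mult_left_mono) auto
  then have "(s - t) / (Q - 1) \<le> s - t" using Q by (simp add: divide_le_eq)
  moreover have "0 \<le> (s - t) / (Q - 1)" using assms Q by simp
  ultimately have x: "0 < x" "x < 1 / Q" using assms(2,4) unfolding x_def Q_def by linarith+
  have t: "0 < t" "t < 1 / Q" "0 < 1 / Q - t" "1 / Q - t < 1 / Q"
    using assms by (auto simp: Q_def)
  have args: "pi * (1 / Q - s) = pi / Q - pi * s" "pi * (1 / Q + s) = pi / Q + pi * s"
       "pi * (1 / Q - t) = pi / Q - pi * t" "Q * (pi / Q - pi * t) = pi - Q * (pi * t)"
       "pi * x = pi / Q - pi * t - (pi * s - pi * t) / (Q - 1)"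
    using Q by (simp_all add: x_def field_simps)
  have f0: "fq q 0 = ln Q" by (simp add: fq_def Q_def)
  have fq_values: "fq q t = ln (sin (Q * (pi * t))) - ln (sin (pi * t))"
      "fq q (1 / Q - t) = ln (sin (Q * (pi * (1 / Q - t)))) - ln (sin (pi * (1 / Q - t)))"
      "fq q x = ln (sin (Q * (pi * x))) - ln (sin (pi * x))"
    using fq_eq_ln_sin_diff t x by (simp_all add: Q_def)
  have "deriv (fq q) t = pi * (Q * cot (Q * (pi * t)) - cot (pi * t))"
    using deriv_fq[of t q] t by (simp add: Q_def)
  then have D: "deriv (fq q) t * ((s - t) / (Q - 1))
      = (Q * cot (Q * (pi * t)) - cot (pi * t)) * ((pi * s - pi * t) / (Q - 1))"
    unfolding right_diff_distrib[symmetric] by simp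
  show ?thesis
    unfolding Gq_def Vq_def Uq_def Q_def[symmetric] x_def[symmetric] f0 D fq_values
    by (simp add: G_sin_def Let_def args)
qed

context
  fixes Q a \<theta> :: real
  assumes Q: "4 \<le> Q" and Qa: "Q * a = pi"
    and \<theta>: "3 * a / 8 < \<theta>" "\<theta> < 5 * a / 8"
begin

lemma a_bounds: "0 < a" "a \<le> pi / 4"
proof -
  have "a = pi / Q" using Qa Q by (simp add: field_simps)
  moreover have "pi / Q \<le> pi / 4" using Q by (intro divide_left_mono) auto
  ultimately show "0 < a" "a \<le> pi / 4" using Q by auto
qed

lemma Q_theta_bounds: "3 * pi / 8 < Q * \<theta>" "Q * \<theta> < 5 * pi / 8"
proof -
  have "Q * (3 * a / 8) < Q * \<theta>" "Q * \<theta> < Q * (5 * a / 8)"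
    using \<theta> Q by (simp_all add: mult_strict_left_mono)
  then show "3 * pi / 8 < Q * \<theta>" "Q * \<theta> < 5 * pi / 8" using Qa by (simp_all add: algebra_simps)
qed

lemma sin_product_lt: "Q * (sin \<theta> * sin (a - \<theta>)) < sin (Q * \<theta>) * sin (a + \<theta>)"
proof -
  note pi = pi_bounds and a = a_bounds
  define X where "X = Q * \<theta>"
  have X: "3 * pi / 8 < X" "X < 5 * pi / 8" using Q_theta_bounds by (simp_all add: X_def)
  have "sin \<theta> * sin (a - \<theta>) \<le> \<theta> * (a - \<theta>)"
    using a \<theta> by (intro mult_mono sin_x_le_x sin_ge_zero) auto
  then have "Q * (Q * (sin \<theta> * sin (a - \<theta>))) \<le> Q * (Q * (\<theta> * (a - \<theta>)))"
    using Q by (intro mult_left_mono) auto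
  also have "\<dots> = X * (pi - X)" using Qa by (simp add: X_def algebra_simps)
  also have "\<dots> \<le> pi\<^sup>2 / 4"
    using zero_le_power2[of "X - pi / 2"] by (simp add: power2_eq_square algebra_simps)
  finally have upper: "Q * (Q * (sin \<theta> * sin (a - \<theta>))) \<le> pi\<^sup>2 / 4" .
  have sin_X: "23 / 25 \<le> sin X"
    by (intro sin_ge_near_pi_half) (use X pi in \<open>unfold abs_le_iff, linarith\<close>)
  have "71 / 100 * (a + \<theta>) \<le> sin (a + \<theta>)" using a \<theta> pi by (intro sin_ge_linear) auto
  then have "Q * (71 / 100 * (a + \<theta>)) \<le> Q * sin (a + \<theta>)"
    using Q by (intro mult_left_mono) auto
  moreover have "Q * (71 / 100 * (a + \<theta>)) = 71 / 100 * (pi + X)"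
    using Qa by (simp add: X_def algebra_simps)
  moreover have "71 / 100 * (11 * pi / 8) \<le> 71 / 100 * (pi + X)" using X by simp
  ultimately have sin_sum: "71 / 100 * (11 * pi / 8) \<le> Q * sin (a + \<theta>)" by linarith
  have "23 / 25 * (71 / 100 * (11 * pi / 8)) \<le> sin X * (Q * sin (a + \<theta>))"
    using sin_X pi by (intro mult_mono[OF sin_X sin_sum]) auto
  moreover have "pi\<^sup>2 / 4 < 23 / 25 * (71 / 100 * (11 * pi / 8))"
    using pi by (simp add: power2_eq_square)
  ultimately have "Q * (Q * (sin \<theta> * sin (a - \<theta>))) < Q * (sin X * sin (a + \<theta>))"
    using upper by (simp add: algebra_simps)
  then show ?thesis using Q by (simp add: X_def)
qed

lemma cot_le_scaled_cot: "cot \<theta> \<le> (Q - 2) * cot (a - \<theta>)"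
proof -
  note pi = pi_bounds and a = a_bounds
  define w where "w = a - \<theta>"
  have w: "0 < w" "w \<le> 1 / 2" using a \<theta> pi by (auto simp: w_def)
  have "\<theta> * cos \<theta> \<le> sin \<theta>" using a \<theta> pi by (intro x_cos_le_sin) auto
  moreover have "sin \<theta> > 0" using a \<theta> pi by (intro sin_gt_zero) auto
  ultimately have "cot \<theta> \<le> 1 / \<theta>" using a \<theta> by (simp add: cot_def field_simps)
  also have "\<dots> \<le> (Q - 2) * (7 / 8 / w)"
  proof -
    have "2 * \<theta> \<le> (Q - 2) * \<theta>" using a \<theta> Q by (intro mult_right_mono) auto
    then have "w \<le> 7 / 8 * ((Q - 2) * \<theta>)" using \<theta> unfolding w_def by linarith
    moreover have "0 < \<theta>" using a \<theta> by simp
    ultimately have "w / (w * \<theta>) \<le> 7 / 8 * ((Q - 2) * \<theta>) / (w * \<theta>)"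
      using w by (intro divide_right_mono) auto
    with \<open>0 < \<theta>\<close> w show ?thesis by (simp add: mult.commute)
  qed
  also have "\<dots> \<le> (Q - 2) * (cos w / w)"
  proof -
    have "w\<^sup>2 \<le> (1 / 2)\<^sup>2" using w by (intro power_mono) auto
    then have "7 / 8 \<le> cos w"
      using cos_ge_one_minus_half_square[of w] by (simp add: power_divide)
    then have "7 / 8 / w \<le> cos w / w" using w by (intro divide_right_mono) auto
    then show ?thesis using Q by (intro mult_left_mono) auto
  qed
  also have "\<dots> \<le> (Q - 2) * cot w"
  proof -
    have "cos w > 0" using w pi by (intro cos_gt_zero_pi) auto
    moreover have "0 < sin w" "sin w \<le> w" using w pi by (auto intro: sin_gt_zero sin_x_le_x)
    ultimately have "cos w / w \<le> cot w" unfolding cot_def by (intro divide_left_mono) auto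
    then show ?thesis using Q by (intro mult_left_mono) auto
  qed
  finally show ?thesis by (simp add: w_def)
qed

lemma G_sin_diagonal:
  "G_sin Q \<theta> \<theta> = ln Q + ln (sin \<theta>) + ln (sin (a - \<theta>)) - ln (sin (Q * \<theta>)) - ln (sin (a + \<theta>))"
proof -
  note pi = pi_bounds and a = a_bounds
  have "pi / Q = a" using Qa Q by (simp add: field_simps)
  moreover have "Q * (a - \<theta>) = pi - Q * \<theta>" using Qa by (simp add: algebra_simps)
  moreover have "sin (a - \<theta>) > 0" "sin (a + \<theta>) > 0" using a \<theta> pi by (auto intro!: sin_gt_zero)
  ultimately show ?thesis by (simp add: G_sin_def ln_div)
qed

lemma G_sin_diagonal_neg: "G_sin Q \<theta> \<theta> < 0"
proof -
  note pi = pi_bounds and a = a_bounds and X = Q_theta_bounds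
  have pos: "sin \<theta> > 0" "sin (a - \<theta>) > 0" "sin (Q * \<theta>) > 0" "sin (a + \<theta>) > 0"
    using a \<theta> X pi by (auto intro!: sin_gt_zero)
  with Q have "ln Q + ln (sin \<theta>) + ln (sin (a - \<theta>)) = ln (Q * (sin \<theta> * sin (a - \<theta>)))"
    by (simp add: ln_mult)
  also have "\<dots> < ln (sin (Q * \<theta>) * sin (a + \<theta>))"
    using sin_product_lt Q pos by (intro ln_strict_mono) auto
  also have "\<dots> = ln (sin (Q * \<theta>)) + ln (sin (a + \<theta>))"
    using pos by (simp add: ln_mult)
  finally show ?thesis by (simp add: G_sin_diagonal)
qed

lemma shift_bounds:
  assumes "\<theta> \<le> \<sigma>" "\<sigma> < a"
  shows "0 \<le> (\<sigma> - \<theta>) / (Q - 1)" "3 * ((\<sigma> - \<theta>) / (Q - 1)) < a - \<theta>"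
proof -
  show "0 \<le> (\<sigma> - \<theta>) / (Q - 1)" using assms Q by simp
  then have "3 * ((\<sigma> - \<theta>) / (Q - 1)) \<le> (Q - 1) * ((\<sigma> - \<theta>) / (Q - 1))"
    using Q by (intro mult_right_mono) auto
  also have "\<dots> = \<sigma> - \<theta>" using Q by simp
  finally show "3 * ((\<sigma> - \<theta>) / (Q - 1)) < a - \<theta>" using assms by linarith
qed

lemma G_sin_le_diagonal:
  assumes \<sigma>: "\<theta> \<le> \<sigma>" "\<sigma> < a"
  shows "G_sin Q \<theta> \<sigma> \<le> G_sin Q \<theta> \<theta>"
proof -
  note pi = pi_bounds and a = a_bounds and X = Q_theta_bounds
  define d where "d = (\<sigma> - \<theta>) / (Q - 1)"
  define \<eta> where "\<eta> = a - \<theta> - d"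
  have d_scaled: "(Q - 1) * d = \<sigma> - \<theta>" using Q by (simp add: d_def)
  have d: "0 \<le> d" "3 * d < a - \<theta>" using shift_bounds[OF \<sigma>] by (simp_all add: d_def)
  have \<eta>: "0 < \<eta>" "\<eta> \<le> a - \<theta>" using d by (auto simp: \<eta>_def)
  have Q_d: "0 \<le> Q * d" "Q * d < pi - Q * \<theta>"
  proof -
    show "0 \<le> Q * d" using d Q by simp
    have "Q * d < Q * (a - \<theta>)" using d Q by (intro mult_strict_left_mono) auto
    then show "Q * d < pi - Q * \<theta>" using Qa by (simp add: algebra_simps)
  qed
  have pos: "sin (a - \<sigma>) > 0" "sin (a + \<sigma>) > 0" "sin (a + \<theta>) > 0"
    using a \<theta> \<sigma> pi by (auto intro!: sin_gt_zero)
  have G: "G_sin Q \<theta> \<sigma> = ln (sin (a - \<sigma>)) - ln (sin (a + \<sigma>)) + ln Q - 2 * ln (sin (Q * \<theta>))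
     + ln (sin \<theta>) + ln (sin (a - \<theta>)) + ln (sin (Q * \<theta> + Q * d)) - ln (sin \<eta>)
     - Q * cot (Q * \<theta>) * d + cot \<theta> * d"
  proof -
    have "pi / Q = a" using Qa Q by (simp add: field_simps)
    moreover have "Q * \<eta> = pi - (Q * \<theta> + Q * d)" using Qa by (simp add: \<eta>_def algebra_simps)
    ultimately show ?thesis
      using pos by (simp add: G_sin_def ln_div \<eta>_def d_def algebra_simps)
  qed
  have tangent_Q_\<theta>: "ln (sin (Q * \<theta> + Q * d)) \<le> ln (sin (Q * \<theta>)) + Q * cot (Q * \<theta>) * d"
    using ln_sin_le_tangent[of "Q * \<theta>" "Q * \<theta> + Q * d"] X Q_d pi by (simp add: mult_ac)
  have tangent_\<eta>: "ln (sin (a - \<sigma>)) \<le> ln (sin \<eta>) - cot \<eta> * ((Q - 2) * d)"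
  proof -
    have "a - \<sigma> = \<eta> - (Q - 2) * d" using d_scaled by (simp add: \<eta>_def algebra_simps)
    then show ?thesis using ln_sin_le_tangent[of \<eta> "a - \<sigma>"] a \<theta> \<sigma> \<eta> pi by simp
  qed
  have mono_a_plus: "ln (sin (a + \<theta>)) \<le> ln (sin (a + \<sigma>))"
    using a \<theta> \<sigma> pi pos by (simp add: sin_monotone_2pi_le)
  have cot_\<theta>: "cot \<theta> * d \<le> cot \<eta> * ((Q - 2) * d)"
  proof -
    have "(Q - 2) * cot (a - \<theta>) \<le> (Q - 2) * cot \<eta>"
      using cot_antimono[of \<eta> "a - \<theta>"] a \<theta> \<eta> Q by (intro mult_left_mono) auto
    with cot_le_scaled_cot have "cot \<theta> * d \<le> (Q - 2) * cot \<eta> * d"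
      using d by (intro mult_right_mono) auto
    then show ?thesis by (simp add: ac_simps)
  qed
  show ?thesis using G G_sin_diagonal tangent_Q_\<theta> tangent_\<eta> mono_a_plus cot_\<theta> by linarith
qed

lemma G_sin_neg: "\<theta> \<le> \<sigma> \<Longrightarrow> \<sigma> < a \<Longrightarrow> G_sin Q \<theta> \<sigma> < 0"
  using G_sin_le_diagonal G_sin_diagonal_neg by fastforce

end

theorem lemma5p10:
  fixes q :: nat and t s :: real
  assumes "q \<ge> 4"
    and "3 / (8 * real q) < t" and "t < 5 / (8 * real q)"
    and "t \<le> s" and "s < 1 / real q"
  shows "Gq q t s < 0"
proof -
  have q: "4 \<le> real q" using assms(1) by simp
  have "0 < 3 / (8 * real q)" using q by simp
  with assms(2) have "0 < t" by linarith
  then have "Gq q t s = G_sin (real q) (pi * t) (pi * s)"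
    using assms by (intro Gq_eq_G_sin) auto
  also have "\<dots> < 0"
  proof (rule G_sin_neg)
    show "real q * (pi / real q) = pi" using q by simp
    show "3 * (pi / real q) / 8 < pi * t" "pi * t < 5 * (pi / real q) / 8"
         "pi * t \<le> pi * s" "pi * s < pi / real q"
      using assms q by (auto simp: field_simps)
  qed (use q in simp)
  finally show ?thesis .
qed

end
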